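(* For $\alpha\in\mathbb{R}\setminus\{0\}$ consider the two-stage explicit Runge--Kutta method with $$A=\begin{pmatrix}0&0\\ \alpha&0\end{pmatrix},\qquad b^\top=\Big(1-\tfrac{1}{2\alpha},\ \tfrac{1}{2\alpha}\Big).$$ Its positivity step-size coefficient is $$\gamma_\alpha=\begin{cases}0,&0\ne\alpha<\tfrac12,\\ 1,&\tfrac12\le\alpha\le1,\\ \tfrac1\alpha,&\alpha>1.\end{cases}$$
   Context: For this method, the positivity polynomials (in the variables $\xi^1_{k-1},\xi^1_k,\xi^2_k$) are $P_0=1-(1-\frac1{2\alpha})\xi^1_k-\frac1{2\alpha}\xi^2_k+\frac12\xi^1_k\xi^2_k$, $P_1=(1-\frac1{2\alpha})\xi^1_k+\frac1{2\alpha}\xi^2_k-\frac12\xi^1_{k-1}\xi^2_k-\frac12\xi^1_k\xi^2_k$, $P_2=\frac12\xi^1_{k-1}\xi^2_k$. These arise as follows: applying the method to $u_k'=q_k(u,t)(u_{k-1}-u_k)/\Delta x$ gives $y^1=u^n$, $y^2_k=u^n_k+\alpha\xi^1_k(y^1_{k-1}-y^1_k)$, $u^{n+1}_k=u^n_k+b_1\xi^1_k(y^1_{k-1}-y^1_k)+b_2\xi^2_k(y^2_{k-1}-y^2_k)$ with $\xi^j_k=\frac{\Delta t}{\Delta x}q_k(y^j,t_n+c_j\Delta t)$, and $u^{n+1}_k=P_0u^n_k+P_1u^n_{k-1}+P_2u^n_{k-2}$. The step-size coefficient is $\gamma_\alpha=\sup\{\delta\ge0:P_0,P_1,P_2\ge0\text{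 on }[0,\delta]^3\}$ (or $0$ if the set is empty). *)

theory Defs
  imports Complex_Main
begin

text \<open>Positivity polynomials of the two-stage explicit RK method with A = [[0,0],[alpha,0]],
  b = (1 - 1/(2 alpha), 1/(2 alpha)), in the variables xi1m = xi^1_{k-1}, xi1 = xi^1_k, xi2 = xi^2_k.\<close>

definition P0 :: "real \<Rightarrow> real \<Rightarrow> real \<Rightarrow> real \<Rightarrow> real" where
  "P0 \<alpha> xi1m xi1 xi2 = 1 - (1 - 1 / (2 * \<alpha>)) * xi1 - 1 / (2 * \<alpha>) * xi2 + 1/2 * xi1 * xi2"

definition P1 :: "real \<Rightarrow> real \<Rightarrow> real \<Rightarrow> real \<Rightarrow> real" where
  "P1 \<alpha> xi1m xi1 xi2 = (1 - 1 / (2 * \<alpha>)) * xi1 + 1 / (2 * \<alpha>) * xi2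
     - 1/2 * xi1m * xi2 - 1/2 * xi1 * xi2"

definition P2 :: "real \<Rightarrow> real \<Rightarrow> real \<Rightarrow> real \<Rightarrow> real" where
  "P2 \<alpha> xi1m xi1 xi2 = 1/2 * xi1m * xi2"

definition admissible_deltas :: "real \<Rightarrow> real set" where
  "admissible_deltas \<alpha> = {\<delta>. \<delta> \<ge> 0 \<and>
     (\<forall>xi1m \<in> {0..\<delta>}. \<forall>xi1 \<in> {0..\<delta>}. \<forall>xi2 \<in> {0..\<delta>}.
        P0 \<alpha> xi1m xi1 xi2 \<ge> 0 \<and> P1 \<alpha> xi1m xi1 xi2 \<ge> 0 \<and> P2 \<alpha> xi1m xi1 xi2 \<ge> 0)}"

definition step_size_coeff :: "real \<Rightarrow> real" where
  "step_size_coeff \<alpha> = (if admissible_deltas \<alpha> = {} then 0 else Sup (admissible_deltas \<alpha>))"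

end

theory Submission
  imports Defs
begin

text \<open>Writing \<open>c = 1/(2\<alpha>)\<close> for the second weight, the sufficiency of the claimed bound
  follows from writing \<open>P\<^sub>0\<close> and \<open>P\<^sub>1\<close> as sums of products of nonnegative factors on the box,
  and its sharpness from a single point per regime at which \<open>P\<^sub>1\<close> turns negative:
  \<open>(0,\<delta>,0)\<close> when \<open>c > 1\<close>, \<open>(\<delta>,0,\<delta>)\<close> when \<open>\<delta> > 2c\<close>, and \<open>(\<delta>,\<delta>,\<delta>)\<close> when \<open>\<delta> > 1\<close>.\<close>

definition positivity_conditions :: "real \<Rightarrow> real \<Rightarrow> real \<Rightarrow> real \<Rightarrow> bool" where
  "positivity_conditions c m x y \<longleftrightarrow>
     0 \<le> 1 - (1 - c) * x - c * y + x * y / 2 \<and>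
     0 \<le> (1 - c) * x + c * y - m * y / 2 - x * y / 2 \<and>
     0 \<le> m * y / 2"

definition max_step :: "real \<Rightarrow> real" where
  "max_step c = (if c \<le> 0 \<or> 1 < c then 0 else min 1 (2 * c))"

lemma positivity_polys_nonneg_iff:
  "(0 \<le> P0 \<alpha> m x y \<and> 0 \<le> P1 \<alpha> m x y \<and> 0 \<le> P2 \<alpha> m x y) \<longleftrightarrow>
     positivity_conditions (1 / (2 * \<alpha>)) m x y"
  unfolding positivity_conditions_def P0_def P1_def P2_def by (simp add: algebra_simps)

lemma positivity_conditions_unit_box:
  assumes "1/2 \<le> c" "c \<le> 1"
    and "0 \<le> m" "m \<le> 1" "0 \<le> x" "x \<le> 1" "0 \<le> y" "y \<le> 1"
  shows "positivity_conditions c m x y"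
proof -
  have "1 - (1 - c) * x - c * y + x * y / 2 = (1 - c) * (1 - x) + c * (1 - y) + x * y / 2"
    by (simp add: algebra_simps)
  moreover have "(1 - c) * x + c * y - m * y / 2 - x * y / 2
      = (1 - c) * x * (1 - y) + (c - 1/2) * y * (1 - x) + (1 - m) * y / 2"
    by (simp add: field_simps)
  ultimately show ?thesis
    unfolding positivity_conditions_def using assms by simp
qed

lemma positivity_conditions_small_box:
  assumes "0 < c" "d \<le> 2 * c" "c < 1/2"
    and "0 \<le> m" "m \<le> d" "0 \<le> x" "x \<le> d" "0 \<le> y" "y \<le> d"
  shows "positivity_conditions c m x y"
proof -
  have "(1 - c) * x + c * y \<le> (1 - c) * d + c * d"
    using assms by (intro add_mono mult_left_mono) auto
  also have "\<dots> = d"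
    by (simp add: algebra_simps)
  finally have "(1 - c) * x + c * y \<le> d" .
  moreover have "0 \<le> x * y"
    using assms by simp
  ultimately have P0: "0 \<le> 1 - (1 - c) * x - c * y + x * y / 2"
    using assms by linarith
  have "(1 - c) * x + c * y - m * y / 2 - x * y / 2
      = (d - m) * y / 2 + y * (2 * c - d) / 2 + x * (1 - c - y / 2)"
    by (simp add: field_simps)
  then show ?thesis
    unfolding positivity_conditions_def using P0 assms by simp
qed

lemma positivity_conditions_imp_le_max_step:
  assumes pos: "\<forall>m\<in>{0..\<delta>}. \<forall>x\<in>{0..\<delta>}. \<forall>y\<in>{0..\<delta>}. positivity_conditions c m x y"
    and "0 < \<delta>"
  shows "\<delta> \<le> max_step c"
proof -
  have "0 \<le> (1 - c) * \<delta>"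
    using pos[rule_format, of 0 \<delta> 0] \<open>0 < \<delta>\<close> by (simp add: positivity_conditions_def)
  then have "c \<le> 1"
    using \<open>0 < \<delta>\<close> by (simp add: zero_le_mult_iff)
  have "0 \<le> \<delta> * (c - \<delta> / 2)"
    using pos[rule_format, of \<delta> 0 \<delta>] \<open>0 < \<delta>\<close> by (simp add: positivity_conditions_def algebra_simps)
  then have "\<delta> \<le> 2 * c"
    using \<open>0 < \<delta>\<close> by (simp add: zero_le_mult_iff)
  have "0 \<le> \<delta> * (1 - \<delta>)"
    using pos[rule_format, of \<delta> \<delta> \<delta>] \<open>0 < \<delta>\<close> by (simp add: positivity_conditions_def algebra_simps)
  then have "\<delta> \<le> 1"
    using \<open>0 < \<delta>\<close> by (simp add: zero_le_mult_iff)
  show ?thesis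
    using \<open>c \<le> 1\<close> \<open>\<delta> \<le> 2 * c\<close> \<open>\<delta> \<le> 1\<close> \<open>0 < \<delta>\<close> by (simp add: max_step_def)
qed

lemma positivity_conditions_box_iff:
  assumes "0 \<le> \<delta>"
  shows "(\<forall>m\<in>{0..\<delta>}. \<forall>x\<in>{0..\<delta>}. \<forall>y\<in>{0..\<delta>}. positivity_conditions c m x y)
           \<longleftrightarrow> \<delta> \<le> max_step c"
proof
  show "\<delta> \<le> max_step c" if "\<forall>m\<in>{0..\<delta>}. \<forall>x\<in>{0..\<delta>}. \<forall>y\<in>{0..\<delta>}. positivity_conditions c m x y"
    using that assms positivity_conditions_imp_le_max_step
    by (cases "\<delta> = 0") (auto simp: max_step_def)
next
  assume "\<delta> \<le> max_step c"
  then consider "\<delta> = 0" | "1/2 \<le> c" "c \<le> 1" "\<delta> \<le> 1" | "0 < c" "c < 1/2" "\<delta> \<le> 2 * c"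
    using assms by (auto simp: max_step_def split: if_splits; linarith)
  then show "\<forall>m\<in>{0..\<delta>}. \<forall>x\<in>{0..\<delta>}. \<forall>y\<in>{0..\<delta>}. positivity_conditions c m x y"
  proof cases
    case 1
    then show ?thesis by (simp add: positivity_conditions_def)
  next
    case 2
    then show ?thesis by (auto intro: positivity_conditions_unit_box)
  next
    case 3
    then show ?thesis by (auto intro: positivity_conditions_small_box)
  qed
qed

lemma admissible_deltas_eq: "admissible_deltas \<alpha> = {0..max_step (1 / (2 * \<alpha>))}"
proof -
  have "admissible_deltas \<alpha> = {\<delta>. 0 \<le> \<delta> \<and>
      (\<forall>m\<in>{0..\<delta>}. \<forall>x\<in>{0..\<delta>}. \<forall>y\<in>{0..\<delta>}. positivity_conditions (1 / (2 * \<alpha>)) m x y)}"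
    unfolding admissible_deltas_def positivity_polys_nonneg_iff ..
  also have "\<dots> = {0..max_step (1 / (2 * \<alpha>))}"
    by (auto simp: positivity_conditions_box_iff cong: conj_cong)
  finally show ?thesis .
qed

lemma max_step_inverse_double:
  assumes "\<alpha> \<noteq> 0"
  shows "max_step (1 / (2 * \<alpha>)) = (if \<alpha> < 1/2 then 0 else if \<alpha> \<le> 1 then 1 else 1 / \<alpha>)"
  using assms by (auto simp: max_step_def field_simps min_def)

theorem proposition2:
  fixes \<alpha> :: real
  assumes "\<alpha> \<noteq> 0"
  shows "step_size_coeff \<alpha> =
           (if \<alpha> < 1/2 then 0 else if \<alpha> \<le> 1 then 1 else 1 / \<alpha>)"
proof -
  have "0 \<le> max_step (1 / (2 * \<alpha>))"
    by (simp add: max_step_def)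
  then show ?thesis
    unfolding step_size_coeff_def admissible_deltas_eq
    using max_step_inverse_double[OF assms] by simp
qed

end
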